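(* Assume $0<\nu<1$ and $\mathbf{x}_E(t_0)\neq\mathbf{x}_P(t_0)$. Let $\phi:\mathbb R^2\to\mathbb R$ be continuous, $\phi^*=\min_{\mathbf{x}\in\mathcal A(t_0)}\phi(\mathbf{x})$ and $\mathcal X^*=\arg\min_{\mathbf{x}\in\mathcal A(t_0)}\phi(\mathbf{x})$. Then for every $\varepsilon>0$ there is $\delta>0$ such that: (a) if the evader moves at maximal speed $\nu$ in a straight line to some $\mathbf{x}^*\in\mathcal X^*$ and then stays there, then against any pursuer control, capture cannot occur at a point with $\phi>\phi^*$ (i.e. whenever capture occurs, $\phi(\mathbf{x}_E(t_f))\le\phi^*$); and (b) if the pursuer uses the law $\mathbf{v}_P=\mathbf{z}_P/\|\mathbf{z}_P\|$, $\mathbf{z}_P=(R_{\mathcal C}-R_{\mathcal A})\mathbf{r}/\|\mathbf{r}\|+\nu\mathbf{y}$, with this $\delta$, then against any admissible evader control capture occurs in finite time with $\phi(\mathbf{x}_E(t_f))\ge\phi^*-\varepsilon$. Hence this strategy pair is an $\varepsilon$-equilibrium.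
   Context: Setting (simple-motion pursuit–evasion in the plane). An evader and a pursuer have positions $\mathbf{x}_E(t),\mathbf{x}_P(t)\in\mathbb R^2$ with dynamics $\dot{\mathbf{x}}_E=\mathbf{v}_E$, $\dot{\mathbf{x}}_P=\mathbf{v}_P$, where $\|\mathbf{v}_E\|\le\nu$, $\|\mathbf{v}_P\|\le 1$, $0\le\nu<1$. The game starts at $t_0$ and ends at capture time $t_f$, the first time $\mathbf{x}_P=\mathbf{x}_E$. Set $\alpha=1/(1-\nu^2)$, $\gamma=\nu\alpha$, $\beta=\nu^2\alpha$, $\mathbf{r}=\mathbf{x}_E-\mathbf{x}_P$. The Apollonius disc $\mathcal A(t)$ is the closed disc with center $\mathbf{x}_{\mathcal A}(t)=\alpha\mathbf{x}_E(t)-\beta\mathbf{x}_P(t)$ and radius $R_{\mathcal A}(t)=\gamma\|\mathbf{r}(t)\|$. Given $\delta>0$, $\mathcal C$ is the closed disc with center $\mathbf{x}_{\mathcal C}=\mathbf{x}_{\mathcal A}(t_0)$ and radius $R_{\mathcal C}=R_{\mathcal A}(t_0)+\delta$; $\mathbf{y}(t)=\mathbf{x}_{\mathcal A}(t)-\mathbf{x}_{\mathcal C}$. Game of Final Location: the terminal payoff to the pursuer is $\phi(\mathbf{x}_E(t_f))$ (pursuer maximizes, evader minimizes). *)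

theory Defs
  imports "HOL-Analysis.Analysis"
begin

type_synonym pt = "real ^ 2"

definition ap_alpha :: "real \<Rightarrow> real" where "ap_alpha nu = 1 / (1 - nu^2)"
definition ap_gamma :: "real \<Rightarrow> real" where "ap_gamma nu = nu * ap_alpha nu"
definition ap_beta  :: "real \<Rightarrow> real" where "ap_beta nu = nu^2 * ap_alpha nu"

definition apollonius_center :: "real \<Rightarrow> pt \<Rightarrow> pt \<Rightarrow> pt" where
  "apollonius_center nu xe xp = ap_alpha nu *\<^sub>R xe - ap_beta nu *\<^sub>R xp"
definition apollonius_radius :: "real \<Rightarrow> pt \<Rightarrow> pt \<Rightarrow> real" where
  "apollonius_radius nu xe xp = ap_gamma nu * norm (xe - xp)"
definition apollonius_disc :: "real \<Rightarrow> pt \<Rightarrow> pt \<Rightarrow> pt set" where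
  "apollonius_disc nu xe xp = cball (apollonius_center nu xe xp) (apollonius_radius nu xe xp)"

text \<open>phi* = min of phi over A(t0) (written as the infimum of the image), X* = argmin.\<close>
definition phi_star :: "(pt \<Rightarrow> real) \<Rightarrow> real \<Rightarrow> pt \<Rightarrow> pt \<Rightarrow> real" where
  "phi_star \<phi> nu xe0 xp0 = Inf (\<phi> ` apollonius_disc nu xe0 xp0)"
definition argmin_set :: "(pt \<Rightarrow> real) \<Rightarrow> real \<Rightarrow> pt \<Rightarrow> pt \<Rightarrow> pt set" where
  "argmin_set \<phi> nu xe0 xp0 =
     {x \<in> apollonius_disc nu xe0 xp0. \<phi> x = phi_star \<phi> nu xe0 xp0}"

text \<open>Admissible trajectory with speed bound c from time t0 on, starting at x0
  (trajectories generated by measurable controls with norm at most c are exactly the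
  c-Lipschitz ones).\<close>
definition admissible_traj :: "real \<Rightarrow> real \<Rightarrow> pt \<Rightarrow> (real \<Rightarrow> pt) \<Rightarrow> bool" where
  "admissible_traj c t0 x0 x \<longleftrightarrow> x t0 = x0 \<and>
     (\<forall>s t. t0 \<le> s \<longrightarrow> t0 \<le> t \<longrightarrow> dist (x s) (x t) \<le> c * \<bar>s - t\<bar>)"

definition capture_time :: "real \<Rightarrow> (real \<Rightarrow> pt) \<Rightarrow> (real \<Rightarrow> pt) \<Rightarrow> real \<Rightarrow> bool" where
  "capture_time t0 xE xP tf \<longleftrightarrow> t0 \<le> tf \<and> xP tf = xE tf \<and> (\<forall>t. t0 \<le> t \<and> t < tf \<longrightarrow> xP t \<noteq> xE t)"

definition straight_evader :: "real \<Rightarrow> real \<Rightarrow> pt \<Rightarrow> pt \<Rightarrow> real \<Rightarrow> pt" where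
  "straight_evader nu t0 xe0 xs t =
     (if xs = xe0 then xe0
      else xe0 + (min (nu * max 0 (t - t0)) (dist xe0 xs) / dist xe0 xs) *\<^sub>R (xs - xe0))"

definition pursuer_law :: "real \<Rightarrow> real \<Rightarrow> pt \<Rightarrow> pt \<Rightarrow> pt \<Rightarrow> pt \<Rightarrow> pt" where
  "pursuer_law nu \<delta> xe0 xp0 xe xp =
     (let r = xe - xp;
          RA = apollonius_radius nu xe xp;
          xC = apollonius_center nu xe0 xp0;
          RC = apollonius_radius nu xe0 xp0 + \<delta>;
          y = apollonius_center nu xe xp - xC;
          z = (RC - RA) *\<^sub>R (r /\<^sub>R norm r) + nu *\<^sub>R y
      in z /\<^sub>R norm z)"

end

theory Submission
  imports Defs
begin

text \<open>
  (a) The identity |x - xE|^2 - nu^2 |x - xP|^2 = (1 - nu^2) (|x - c_A|^2 - R_A^2) shows that the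
  evader reaches every point of the open Apollonius disc strictly before the pursuer can. All
  points of the segment from xE0 to a minimiser except its endpoint lie in that open disc, so the
  straight-line evader can only be caught at the minimiser.

  (b) Under the pursuer law the margin (R_C - R_A)^2 - |x_A - x_C|^2, which measures how deeply the
  Apollonius disc A(t) sits inside the disc C, grows at a fixed linear rate as long as it exceeds
  delta^2, yet it is bounded by R_C^2. Hence capture happens in finite time, and A(t) stays inside C
  until then. At capture A(t) shrinks to the capture point, which thus lies within delta of A(t0);
  uniform continuity of phi near A(t0) turns this into phi >= phi* - eps for small delta.
\<close>

section \<open>Apollonius discs and the straight-line evader\<close>

lemma apollonius_constants:
  assumes "0 < \<nu>" "\<nu> < 1"
  shows "1 - \<nu>^2 > 0" "ap_alpha \<nu> > 0" "ap_gamma \<nu> > 0" "ap_beta \<nu> > 0"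
    "ap_gamma \<nu> = \<nu> * ap_alpha \<nu>" "ap_beta \<nu> = \<nu> * ap_gamma \<nu>"
    "ap_alpha \<nu> - ap_beta \<nu> = 1"
proof -
  have "\<nu> * \<nu> < 1 * 1" using assms by (intro mult_strict_mono) auto
  then show n: "1 - \<nu>^2 > 0" by (simp add: power2_eq_square)
  then show a: "ap_alpha \<nu> > 0" unfolding ap_alpha_def by simp
  show "ap_gamma \<nu> > 0" "ap_beta \<nu> > 0"
    using a assms unfolding ap_gamma_def ap_beta_def by simp_all
  show "ap_gamma \<nu> = \<nu> * ap_alpha \<nu>" unfolding ap_gamma_def ..
  show "ap_beta \<nu> = \<nu> * ap_gamma \<nu>"
    unfolding ap_beta_def ap_gamma_def by (simp add: power2_eq_square)
  show "ap_alpha \<nu> - ap_beta \<nu> = 1"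
    unfolding ap_beta_def ap_alpha_def using n by (simp add: field_simps)
qed

lemma apollonius_center_self: "apollonius_center \<nu> x x = x" if "0 < \<nu>" "\<nu> < 1"
  using apollonius_constants(7)[OF that]
  by (simp add: apollonius_center_def scaleR_left_diff_distrib[symmetric])

text \<open>The Apollonius disc is the set of points the evader reaches no later than the pursuer.\<close>

lemma apollonius_identity:
  fixes x e p :: "'a::real_inner"
  assumes nu: "0 < \<nu>" "\<nu> < 1"
  shows "(norm (x - e))^2 - \<nu>^2 * (norm (x - p))^2
     = (1 - \<nu>^2) * ((norm (x - (ap_alpha \<nu> *\<^sub>R e - ap_beta \<nu> *\<^sub>R p)))^2 - (ap_gamma \<nu> * norm (e - p))^2)"
proof -
  define k where "k = 1 - \<nu>^2"
  have k: "k \<noteq> 0" using apollonius_constants(1)[OF nu] unfolding k_def by simp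
  define b where "b = \<nu>^2 / k"
  have \<alpha>: "ap_alpha \<nu> = 1 + b" and \<beta>: "ap_beta \<nu> = b" and \<gamma>: "ap_gamma \<nu> = \<nu> / k"
    using k by (simp_all add: ap_alpha_def ap_beta_def ap_gamma_def b_def k_def field_simps)
  have kb: "k * b = \<nu>^2" using k unfolding b_def by simp
  have "k * (b * b - \<nu> / k * (\<nu> / k)) = \<nu>^2 * (\<nu>^2 - 1) / k"
    using k unfolding b_def by (simp add: field_simps power2_eq_square)
  also have "\<nu>^2 - 1 = - k" unfolding k_def by simp
  finally have kbg: "k * (b * b - \<nu> / k * (\<nu> / k)) = - (\<nu>^2)" using k by simp
  define a where "a = x - e"
  define r where "r = e - p"
  have c: "x - (ap_alpha \<nu> *\<^sub>R e - ap_beta \<nu> *\<^sub>R p) = a - b *\<^sub>R r"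
    unfolding a_def r_def \<alpha> \<beta> by (simp add: algebra_simps)
  have xp: "x - p = a + r" and xe: "x - e = a" and ep: "e - p = r" unfolding a_def r_def by simp_all
  have "k * ((norm (a - b *\<^sub>R r))^2 - (\<nu> / k * norm r)^2)
      = k * inner a a - 2 * (k * b) * inner a r + k * (b * b - \<nu> / k * (\<nu> / k)) * inner r r"
    unfolding power_mult_distrib power2_norm_eq_inner
    by (simp add: inner_diff_left inner_diff_right inner_commute algebra_simps power2_eq_square)
  also have "\<dots> = (norm a)^2 - \<nu>^2 * (norm (a + r))^2"
    unfolding kb kbg power2_norm_eq_inner
    by (simp add: k_def inner_add_left inner_add_right inner_commute algebra_simps)
  finally show ?thesis unfolding c xp xe ep \<gamma> k_def[symmetric] by simp
qed

lemma evader_ahead_in_apollonius_interior: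
  assumes nu: "0 < \<nu>" "\<nu> < 1"
    and x: "dist x (apollonius_center \<nu> e p) < apollonius_radius \<nu> e p"
  shows "norm (x - e) < \<nu> * norm (x - p)"
proof -
  have "(norm (x - apollonius_center \<nu> e p))^2 < (apollonius_radius \<nu> e p)^2"
    using x by (simp add: dist_norm power_strict_mono)
  then have "(norm (x - e))^2 - \<nu>^2 * (norm (x - p))^2 < 0"
    using apollonius_identity[OF nu, of x e p] apollonius_constants(1)[OF nu]
    unfolding apollonius_center_def apollonius_radius_def by (simp add: mult_pos_neg)
  then have "(norm (x - e))^2 < (\<nu> * norm (x - p))^2" by (simp add: power_mult_distrib)
  then show ?thesis using nu by (simp add: power_less_imp_less_base)
qed

lemma evader_in_apollonius_interior:
  assumes nu: "0 < \<nu>" "\<nu> < 1" and "e \<noteq> p"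
  shows "dist e (apollonius_center \<nu> e p) < apollonius_radius \<nu> e p"
proof -
  note cs = apollonius_constants[OF nu]
  have "e - apollonius_center \<nu> e p = - (ap_beta \<nu> *\<^sub>R (e - p))"
    unfolding apollonius_center_def using cs(7) by (simp add: algebra_simps)
  then have "dist e (apollonius_center \<nu> e p) = ap_beta \<nu> * norm (e - p)"
    using cs by (simp add: dist_norm)
  also have "\<dots> < ap_gamma \<nu> * norm (e - p)"
    using cs nu assms(3) by (simp add: mult_strict_right_mono)
  finally show ?thesis unfolding apollonius_radius_def .
qed

lemma straight_evader_captured_at_target:
  fixes xP :: "real \<Rightarrow> pt"
  assumes nu: "0 < \<nu>" "\<nu> < 1" and ne: "xE0 \<noteq> xP0"
    and xs: "xs \<in> apollonius_disc \<nu> xE0 xP0"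
    and adm: "admissible_traj 1 t0 xP0 xP"
    and cap: "capture_time t0 (straight_evader \<nu> t0 xE0 xs) xP tf"
  shows "straight_evader \<nu> t0 xE0 xs tf = xs"
proof (cases "xs = xE0 \<or> dist xE0 xs \<le> \<nu> * (tf - t0)")
  case True
  then show ?thesis using cap by (auto simp: straight_evader_def capture_time_def)
next
  case False
  define c where "c = apollonius_center \<nu> xE0 xP0"
  define R where "R = apollonius_radius \<nu> xE0 xP0"
  define l where "l = \<nu> * (tf - t0) / dist xE0 xs"
  define x where "x = xE0 + l *\<^sub>R (xs - xE0)"
  have tf: "t0 \<le> tf" "xP tf = x"
    using cap False unfolding capture_time_def straight_evader_def x_def l_def by auto
  have l: "0 \<le> l" "l < 1" using False nu tf(1) unfolding l_def by auto
  have xE0: "norm (xE0 - c) < R" and xs': "norm (xs - c) \<le> R"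
    using evader_in_apollonius_interior[OF nu ne] xs
    unfolding c_def R_def apollonius_disc_def by (simp_all add: dist_norm norm_minus_commute)
  have "x - c = (1 - l) *\<^sub>R (xE0 - c) + l *\<^sub>R (xs - c)" unfolding x_def by (simp add: algebra_simps)
  then have "norm (x - c) \<le> (1 - l) * norm (xE0 - c) + l * norm (xs - c)"
    using l by (metis abs_of_nonneg diff_ge_0_iff_ge less_imp_le norm_scaleR norm_triangle_ineq)
  also have "\<dots> < (1 - l) * R + l * R"
    using xE0 xs' l by (intro add_less_le_mono mult_strict_left_mono mult_left_mono) auto
  finally have "dist x c < R" by (simp add: dist_norm algebra_simps)
  then have ahead: "norm (x - xE0) < \<nu> * norm (x - xP0)"
    using evader_ahead_in_apollonius_interior[OF nu] unfolding c_def R_def by blast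
  have "norm (x - xE0) = \<nu> * (tf - t0)"
    using l False nu tf(1) by (auto simp: x_def l_def dist_norm norm_minus_commute)
  moreover have "norm (x - xP0) \<le> tf - t0"
    using adm tf unfolding admissible_traj_def by (metis abs_of_nonneg diff_ge_0_iff_ge dist_norm mult_1 order_refl)
  then have "\<nu> * norm (x - xP0) \<le> \<nu> * (tf - t0)" using nu by (intro mult_left_mono) auto
  ultimately show ?thesis using ahead by linarith
qed

section \<open>The Lyapunov function of the pursuer law\<close>

lemma le_linearized_sqrt:
  fixes p q s t :: real
  assumes "p > 0" and "q^2 = p^2 + 2 * s + t"
  shows "q \<le> p + s / p + t / (2 * p)"
proof -
  have "2 * p * q \<le> p^2 + q^2" by (rule sum_squares_bound)
  then have "q \<le> (q^2 + p^2) / (2 * p)" using assms(1) by (simp add: pos_le_divide_eq algebra_simps)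
  also have "\<dots> = p + s / p + t / (2 * p)" using assms by (simp add: field_simps power2_eq_square)
  finally show ?thesis .
qed

lemma norm_add_le_linearization:
  fixes r d :: "'a::real_inner"
  assumes "r \<noteq> 0"
  shows "norm (r + d) \<le> norm r + inner (r /\<^sub>R norm r) d + (norm d)^2 / (2 * norm r)"
proof -
  have "(norm (r + d))^2 = (norm r)^2 + 2 * inner r d + (norm d)^2"
    unfolding power2_norm_eq_inner by (simp add: inner_add_left inner_add_right inner_commute)
  moreover have "inner (r /\<^sub>R norm r) d = inner r d / norm r"
    by (simp add: divide_inverse mult.commute)
  ultimately show ?thesis using le_linearized_sqrt[of "norm r"] assms by simp
qed

lemma inner_ge_along_direction:
  fixes z b :: "'a::real_inner"
  assumes "z \<noteq> 0"
  shows "inner z b \<ge> h * norm z - norm z * norm (b - h *\<^sub>R (z /\<^sub>R norm z))"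
proof -
  have "inner z z = norm z * norm z" by (metis power2_norm_eq_inner power2_eq_square)
  then have "inner z (h *\<^sub>R (z /\<^sub>R norm z)) = h * norm z" using assms by simp
  moreover have "inner z b = inner z (h *\<^sub>R (z /\<^sub>R norm z)) + inner z (b - h *\<^sub>R (z /\<^sub>R norm z))"
    by (simp add: inner_diff_right)
  moreover have "- inner z (b - h *\<^sub>R (z /\<^sub>R norm z)) \<le> norm z * norm (b - h *\<^sub>R (z /\<^sub>R norm z))"
    by (rule abs_le_D2[OF Cauchy_Schwarz_ineq2])
  ultimately show ?thesis by linarith
qed

lemma norm_le_of_near_unit_step:
  fixes b v :: "'a::real_normed_vector"
  assumes "norm v = 1" "norm (b - h *\<^sub>R v) \<le> \<eta> * h" "\<eta> \<le> 1" "0 \<le> h"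
  shows "norm b \<le> 2 * h"
proof -
  have "norm b \<le> norm (b - h *\<^sub>R v) + h" using norm_triangle_sub[of b "h *\<^sub>R v"] assms(1,4) by simp
  moreover have "\<eta> * h \<le> 1 * h" using assms(3,4) by (rule mult_right_mono)
  ultimately show ?thesis using assms(2) by linarith
qed

lemma norm_second_order_le:
  fixes a b :: "'a::real_normed_vector"
  assumes a: "norm a \<le> h" and b: "norm b \<le> 2 * h" and "0 \<le> \<alpha>" "0 \<le> \<beta>" "0 \<le> \<kappa>"
  shows "\<kappa> * (norm (a - b))^2 + (norm (\<alpha> *\<^sub>R a - \<beta> *\<^sub>R b))^2 \<le> (9 * \<kappa> + (\<alpha> + 2 * \<beta>)^2) * h^2"
proof -
  have "norm (a - b) \<le> 3 * h" using norm_triangle_ineq4[of a b] a b by linarith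
  then have "\<kappa> * (norm (a - b))^2 \<le> \<kappa> * (3 * h)^2" using assms by (intro mult_left_mono power_mono) auto
  moreover have "\<alpha> * norm a + \<beta> * norm b \<le> \<alpha> * h + \<beta> * (2 * h)"
    using assms by (intro add_mono mult_left_mono) auto
  then have "norm (\<alpha> *\<^sub>R a - \<beta> *\<^sub>R b) \<le> (\<alpha> + 2 * \<beta>) * h"
    using norm_triangle_ineq4[of "\<alpha> *\<^sub>R a" "\<beta> *\<^sub>R b"] assms by (simp add: algebra_simps)
  then have "(norm (\<alpha> *\<^sub>R a - \<beta> *\<^sub>R b))^2 \<le> ((\<alpha> + 2 * \<beta>) * h)^2" by (intro power_mono) auto
  moreover have "(9 * \<kappa> + (\<alpha> + 2 * \<beta>)^2) * h^2 = \<kappa> * (3 * h)^2 + ((\<alpha> + 2 * \<beta>) * h)^2"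
    by (simp add: power2_eq_square algebra_simps)
  ultimately show ?thesis by linarith
qed

lemma norm_swap_scaled_sum_power2_diff:
  fixes u y :: "'a::real_inner"
  assumes "norm u = 1"
  shows "(norm (w *\<^sub>R u + \<nu> *\<^sub>R y))^2 - (norm ((\<nu> * w) *\<^sub>R u + y))^2
    = (1 - \<nu>^2) * (w^2 - (norm y)^2)"
proof -
  have "inner u u = 1" using assms by (simp add: power2_norm_eq_inner[symmetric])
  then show ?thesis
    unfolding power2_norm_eq_inner
    by (simp add: inner_add_left inner_add_right inner_commute algebra_simps power2_eq_square)
qed

text \<open>In the first-order change of the margin the pursuer's step is paired with
  z = w u + nu y and the evader's with nu w u + y (see nesting_margin_increment); this
  quantifies how much the pursuer outweighs the evader.\<close>

lemma pursuit_direction_advantage: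
  fixes u y :: "'a::real_inner"
  assumes u: "norm u = 1" and nu: "0 < \<nu>" "\<nu> < 1" and w: "0 < w" "w \<le> RC"
    and D: "0 < D" "D \<le> w^2 - (norm y)^2"
  shows "w *\<^sub>R u + \<nu> *\<^sub>R y \<noteq> 0"
    and "norm (w *\<^sub>R u + \<nu> *\<^sub>R y) - norm ((\<nu> * w) *\<^sub>R u + y) \<ge> (1 - \<nu>^2) * D / (4 * RC)"
proof -
  define Z where "Z = norm (w *\<^sub>R u + \<nu> *\<^sub>R y)"
  define Q where "Q = norm ((\<nu> * w) *\<^sub>R u + y)"
  have k: "1 - \<nu>^2 > 0" using apollonius_constants(1)[OF nu] .
  have "(1 - \<nu>^2) * D \<le> (1 - \<nu>^2) * (w^2 - (norm y)^2)" using D k by simp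
  then have ZQ: "(1 - \<nu>^2) * D \<le> Z^2 - Q^2"
    using norm_swap_scaled_sum_power2_diff[OF u, of w \<nu> y] unfolding Z_def Q_def by simp
  have "(norm y)^2 \<le> w^2" using D by simp
  then have yw: "norm y \<le> w" by (rule power2_le_imp_le[OF _ less_imp_le[OF w(1)]])
  have "Z \<le> w + \<nu> * norm y"
    using norm_triangle_ineq[of "w *\<^sub>R u" "\<nu> *\<^sub>R y"] u w nu unfolding Z_def by simp
  moreover have "Q \<le> \<nu> * w + norm y"
    using norm_triangle_ineq[of "(\<nu> * w) *\<^sub>R u" y] u w nu unfolding Q_def by simp
  moreover have "\<nu> * norm y \<le> 1 * w" using nu yw by (intro mult_mono) auto
  moreover have "\<nu> * w \<le> 1 * w" using nu w by (intro mult_right_mono) auto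
  ultimately have sum: "Z + Q \<le> 4 * RC" using yw w by linarith
  have "(1 - \<nu>^2) * D > 0" using k D by simp
  then have "Z^2 > 0" using ZQ zero_le_power2[of Q] by linarith
  then have Z: "Z > 0" unfolding Z_def by simp
  show "w *\<^sub>R u + \<nu> *\<^sub>R y \<noteq> 0" using Z unfolding Z_def by auto
  have Q: "Q \<ge> 0" unfolding Q_def by simp
  have "(1 - \<nu>^2) * D / (4 * RC) \<le> (1 - \<nu>^2) * D / (Z + Q)"
    using sum Z Q k D by (intro divide_left_mono) auto
  also have "\<dots> \<le> (Z^2 - Q^2) / (Z + Q)" using ZQ Z Q by (simp add: divide_right_mono)
  also have "\<dots> = Z - Q" using Z Q by (simp add: field_simps power2_eq_square)
  finally show "norm (w *\<^sub>R u + \<nu> *\<^sub>R y) - norm ((\<nu> * w) *\<^sub>R u + y) \<ge> (1 - \<nu>^2) * D / (4 * RC)"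
    unfolding Z_def Q_def .
qed

definition radius_gap :: "real \<Rightarrow> real \<Rightarrow> pt \<Rightarrow> pt \<Rightarrow> real" where
  "radius_gap \<nu> RC e p = RC - apollonius_radius \<nu> e p"

text \<open>While the radius gap is positive, a positive margin means that the Apollonius disc of (e, p)
  lies in the interior of the disc of radius RC around xC. It is the Lyapunov function of the pursuit.\<close>

definition nesting_margin :: "real \<Rightarrow> real \<Rightarrow> pt \<Rightarrow> pt \<Rightarrow> pt \<Rightarrow> real" where
  "nesting_margin \<nu> RC xC e p =
     (radius_gap \<nu> RC e p)^2 - (norm (apollonius_center \<nu> e p - xC))^2"

text \<open>z is the unnormalised direction of the pursuer law.\<close>

lemma nesting_margin_increment:
  fixes \<nu> RC h :: real and e p a b xC :: pt
  defines "\<rho> \<equiv> norm (e - p)" and "w \<equiv> radius_gap \<nu> RC e p" and "u \<equiv> (e - p) /\<^sub>R norm (e - p)"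
    and "y \<equiv> apollonius_center \<nu> e p - xC"
  defines "z \<equiv> w *\<^sub>R u + \<nu> *\<^sub>R y"
  assumes nu: "0 < \<nu>" "\<nu> < 1" and ne: "e \<noteq> p" and w: "w > 0" and a: "norm a \<le> \<nu> * h"
    and z: "z \<noteq> 0"
  shows "nesting_margin \<nu> RC xC (e + a) (p + b) - nesting_margin \<nu> RC xC e p
     \<ge> 2 * ap_gamma \<nu> * (h * (norm z - norm ((\<nu> * w) *\<^sub>R u + y)) - norm z * norm (b - h *\<^sub>R (z /\<^sub>R norm z)))
       - (w * ap_gamma \<nu> * (norm (a - b))^2 / \<rho> + (norm (ap_alpha \<nu> *\<^sub>R a - ap_beta \<nu> *\<^sub>R b))^2)"
proof -
  note cs = apollonius_constants[OF nu]
  define \<alpha> \<beta> \<gamma> where "\<alpha> = ap_alpha \<nu>" and "\<beta> = ap_beta \<nu>" and "\<gamma> = ap_gamma \<nu>"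
  have \<gamma>: "\<gamma> > 0" "\<alpha> = \<gamma> / \<nu>" "\<beta> = \<nu> * \<gamma>" using cs nu unfolding \<alpha>_def \<beta>_def \<gamma>_def by auto
  define d where "d = a - b"
  have \<rho>: "\<rho> > 0" using ne unfolding \<rho>_def by simp
  define \<rho>' where "\<rho>' = norm (e + a - (p + b))"
  have "\<rho>' \<le> \<rho> + inner u d + (norm d)^2 / (2 * \<rho>)"
    using norm_add_le_linearization[of "e - p" d] ne unfolding \<rho>'_def \<rho>_def u_def d_def
    by (simp add: algebra_simps)
  then have "2 * w * \<gamma> * (\<rho>' - \<rho>) \<le> 2 * w * \<gamma> * (inner u d + (norm d)^2 / (2 * \<rho>))"
    using w \<gamma> by (intro mult_left_mono) auto
  moreover have "radius_gap \<nu> RC (e + a) (p + b) = w - \<gamma> * (\<rho>' - \<rho>)"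
    unfolding w_def radius_gap_def apollonius_radius_def \<gamma>_def \<rho>_def \<rho>'_def by (simp add: algebra_simps)
  then have "(radius_gap \<nu> RC (e + a) (p + b))^2 \<ge> w^2 - 2 * w * \<gamma> * (\<rho>' - \<rho>)"
    by (simp add: power2_diff)
  ultimately have gap: "(radius_gap \<nu> RC (e + a) (p + b))^2
      \<ge> w^2 - 2 * w * \<gamma> * inner u d - w * \<gamma> * (norm d)^2 / \<rho>"
    using \<rho> by (simp add: algebra_simps)
  have "apollonius_center \<nu> (e + a) (p + b) - xC = y + (\<alpha> *\<^sub>R a - \<beta> *\<^sub>R b)"
    unfolding y_def apollonius_center_def \<alpha>_def \<beta>_def by (simp add: algebra_simps)
  then have center: "(norm (apollonius_center \<nu> (e + a) (p + b) - xC))^2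
      = (norm y)^2 + 2 * inner y (\<alpha> *\<^sub>R a - \<beta> *\<^sub>R b) + (norm (\<alpha> *\<^sub>R a - \<beta> *\<^sub>R b))^2"
    unfolding power2_norm_eq_inner by (simp add: inner_add_left inner_add_right inner_commute)
  text \<open>The first-order terms regroup into a pairing of a with the evader's best direction and
    of b with the pursuer direction z.\<close>
  have first_order: "- 2 * w * \<gamma> * inner u d - 2 * inner y (\<alpha> *\<^sub>R a - \<beta> *\<^sub>R b)
      = 2 * \<gamma> * (inner z b - inner ((\<nu> * w) *\<^sub>R u + y) a / \<nu>)"
    unfolding z_def d_def \<gamma>(2,3) using nu
    by (simp add: inner_add_left inner_add_right inner_diff_left inner_diff_right inner_commute
        algebra_simps) (simp add: field_simps)
  have "inner ((\<nu> * w) *\<^sub>R u + y) a \<le> norm ((\<nu> * w) *\<^sub>R u + y) * norm a"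
    by (rule norm_cauchy_schwarz)
  also have "\<dots> \<le> norm ((\<nu> * w) *\<^sub>R u + y) * (\<nu> * h)"
    using a by (intro mult_left_mono) auto
  finally have "inner ((\<nu> * w) *\<^sub>R u + y) a / \<nu> \<le> h * norm ((\<nu> * w) *\<^sub>R u + y)"
    using nu by (simp add: field_simps)
  then have "h * (norm z - norm ((\<nu> * w) *\<^sub>R u + y)) - norm z * norm (b - h *\<^sub>R (z /\<^sub>R norm z))
      \<le> inner z b - inner ((\<nu> * w) *\<^sub>R u + y) a / \<nu>"
    using inner_ge_along_direction[OF z, of h b] by (simp add: right_diff_distrib)
  then have "2 * \<gamma> * (h * (norm z - norm ((\<nu> * w) *\<^sub>R u + y)) - norm z * norm (b - h *\<^sub>R (z /\<^sub>R norm z)))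
      \<le> 2 * \<gamma> * (inner z b - inner ((\<nu> * w) *\<^sub>R u + y) a / \<nu>)"
    using \<gamma> by (intro mult_left_mono) auto
  then show ?thesis
    using gap center first_order
    unfolding nesting_margin_def w_def[symmetric] y_def[symmetric] d_def[symmetric]
      \<alpha>_def[symmetric] \<beta>_def[symmetric] \<gamma>_def[symmetric]
    by linarith
qed

lemma nesting_margin_step_ge:
  fixes \<nu> RC h \<eta> D :: real and e p a b xC :: pt
  defines "\<rho> \<equiv> norm (e - p)" and "w \<equiv> radius_gap \<nu> RC e p" and "u \<equiv> (e - p) /\<^sub>R norm (e - p)"
    and "y \<equiv> apollonius_center \<nu> e p - xC"
  defines "z \<equiv> w *\<^sub>R u + \<nu> *\<^sub>R y"
  assumes nu: "0 < \<nu>" "\<nu> < 1" and ne: "e \<noteq> p" and w: "w > 0" and z: "z \<noteq> 0"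
    and h: "0 \<le> h" and a: "norm a \<le> \<nu> * h"
    and b: "norm (b - h *\<^sub>R (z /\<^sub>R norm z)) \<le> \<eta> * h" "\<eta> \<le> 1"
    and advantage: "D \<le> norm z - norm ((\<nu> * w) *\<^sub>R u + y)" and small: "norm z * \<eta> \<le> D / 4"
  shows "nesting_margin \<nu> RC xC e p + 3/2 * ap_gamma \<nu> * D * h
      - (9 * (w * ap_gamma \<nu> / \<rho>) + (ap_alpha \<nu> + 2 * ap_beta \<nu>)^2) * h^2
    \<le> nesting_margin \<nu> RC xC (e + a) (p + b)"
proof -
  note cs = apollonius_constants[OF nu]
  have \<rho>: "\<rho> > 0" using ne unfolding \<rho>_def by simp
  have "\<nu> * h \<le> 1 * h" using nu h by (intro mult_right_mono) auto
  then have "norm a \<le> h" using a by linarith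
  moreover have "norm b \<le> 2 * h" using norm_le_of_near_unit_step[OF _ b h] z by simp
  ultimately have second_order: "w * ap_gamma \<nu> * (norm (a - b))^2 / \<rho> + (norm (ap_alpha \<nu> *\<^sub>R a - ap_beta \<nu> *\<^sub>R b))^2
      \<le> (9 * (w * ap_gamma \<nu> / \<rho>) + (ap_alpha \<nu> + 2 * ap_beta \<nu>)^2) * h^2"
    using norm_second_order_le[of a h b "ap_alpha \<nu>" "ap_beta \<nu>" "w * ap_gamma \<nu> / \<rho>"] cs w \<rho> by simp
  have "h * D \<le> h * (norm z - norm ((\<nu> * w) *\<^sub>R u + y))" using advantage h by (rule mult_left_mono)
  moreover have "norm z * norm (b - h *\<^sub>R (z /\<^sub>R norm z)) \<le> D / 4 * h"
    using mult_left_mono[OF b(1), of "norm z"] mult_right_mono[OF small h] by (simp add: mult.assoc)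
  ultimately have "h * D - D / 4 * h
      \<le> h * (norm z - norm ((\<nu> * w) *\<^sub>R u + y)) - norm z * norm (b - h *\<^sub>R (z /\<^sub>R norm z))"
    by linarith
  then have "2 * ap_gamma \<nu> * (h * D - D / 4 * h)
      \<le> 2 * ap_gamma \<nu> * (h * (norm z - norm ((\<nu> * w) *\<^sub>R u + y)) - norm z * norm (b - h *\<^sub>R (z /\<^sub>R norm z)))"
    using cs by (intro mult_left_mono) auto
  moreover have "2 * ap_gamma \<nu> * (h * D - D / 4 * h) = 3/2 * ap_gamma \<nu> * D * h" by (simp add: algebra_simps)
  ultimately show ?thesis
    using nesting_margin_increment[OF nu ne _ a, of RC xC b] w z second_order
    unfolding \<rho>_def w_def u_def y_def z_def by linarith
qed

text \<open>The factor ap_gamma converts pursuer and evader motion into motion of the Apollonius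
  radius; the other factor is the bound of pursuit_direction_advantage at D = delta^2.\<close>

definition margin_rate :: "real \<Rightarrow> real \<Rightarrow> real \<Rightarrow> real" where
  "margin_rate \<nu> \<delta> RC = ap_gamma \<nu> * ((1 - \<nu>^2) * \<delta>^2 / (4 * RC))"

lemma margin_rate_pos:
  assumes "0 < \<nu>" "\<nu> < 1" "0 < \<delta>"
  shows "0 < margin_rate \<nu> \<delta> (apollonius_radius \<nu> xE0 xP0 + \<delta>)"
  using apollonius_constants[OF assms(1,2)] assms(3)
  by (simp add: margin_rate_def apollonius_radius_def add_nonneg_pos)

lemma nesting_margin_one_step:
  fixes \<nu> \<delta> RC :: real and xE0 xP0 xC e p :: pt
  assumes RC: "RC = apollonius_radius \<nu> xE0 xP0 + \<delta>" and xC: "xC = apollonius_center \<nu> xE0 xP0"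
    and nu: "0 < \<nu>" "\<nu> < 1" and dl: "0 < \<delta>" and ne: "e \<noteq> p"
    and W: "radius_gap \<nu> RC e p > 0" and G: "\<delta>^2 \<le> nesting_margin \<nu> RC xC e p"
  obtains \<eta> K where "0 < \<eta>" "0 \<le> K"
    "\<And>h a b. 0 \<le> h \<Longrightarrow> norm a \<le> \<nu> * h \<Longrightarrow> norm (b - h *\<^sub>R pursuer_law \<nu> \<delta> xE0 xP0 e p) \<le> \<eta> * h \<Longrightarrow>
       nesting_margin \<nu> RC xC e p + 3/2 * margin_rate \<nu> \<delta> RC * h - K * h^2
         \<le> nesting_margin \<nu> RC xC (e + a) (p + b)
       \<and> radius_gap \<nu> RC e p - 3 * ap_gamma \<nu> * h \<le> radius_gap \<nu> RC (e + a) (p + b)"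
proof -
  note cs = apollonius_constants[OF nu]
  define w where "w = radius_gap \<nu> RC e p"
  define u where "u = (e - p) /\<^sub>R norm (e - p)"
  define y where "y = apollonius_center \<nu> e p - xC"
  define z where "z = w *\<^sub>R u + \<nu> *\<^sub>R y"
  define D where "D = (1 - \<nu>^2) * \<delta>^2 / (4 * RC)"
  have RCpos: "RC > 0" using RC dl cs unfolding apollonius_radius_def by (simp add: add_nonneg_pos)
  have w: "0 < w" "w \<le> RC" using W cs unfolding w_def radius_gap_def apollonius_radius_def by auto
  have "norm u = 1" using ne unfolding u_def by simp
  from pursuit_direction_advantage[OF this nu w, of "\<delta>^2" y] G dl
  have z: "z \<noteq> 0" and advantage: "D \<le> norm z - norm ((\<nu> * w) *\<^sub>R u + y)"
    unfolding z_def D_def nesting_margin_def w_def y_def by auto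
  have law: "pursuer_law \<nu> \<delta> xE0 xP0 e p = z /\<^sub>R norm z"
    unfolding pursuer_law_def Let_def z_def w_def u_def y_def RC xC radius_gap_def by simp
  define \<eta> where "\<eta> = min 1 (D / (4 * norm z))"
  define K where "K = 9 * (w * ap_gamma \<nu> / norm (e - p)) + (ap_alpha \<nu> + 2 * ap_beta \<nu>)^2"
  have \<eta>: "0 < \<eta>" "\<eta> \<le> 1" "norm z * \<eta> \<le> D / 4"
    using RCpos cs dl z by (auto simp: \<eta>_def D_def min_def field_simps)
  show thesis
  proof (rule that[of \<eta> K])
    show "0 < \<eta>" by (rule \<eta>(1))
    show "0 \<le> K" unfolding K_def using w cs by simp
    fix h :: real and a b :: pt
    assume h: "0 \<le> h" and a: "norm a \<le> \<nu> * h"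
      and b: "norm (b - h *\<^sub>R pursuer_law \<nu> \<delta> xE0 xP0 e p) \<le> \<eta> * h"
    have "nesting_margin \<nu> RC xC e p + 3/2 * margin_rate \<nu> \<delta> RC * h - K * h^2
        \<le> nesting_margin \<nu> RC xC (e + a) (p + b)"
      using nesting_margin_step_ge[OF nu ne _ _ h a _ \<eta>(2) advantage[unfolded z_def w_def u_def y_def]]
        w z b \<eta>(3) unfolding law z_def w_def u_def y_def K_def margin_rate_def D_def[symmetric]
      by (simp add: mult.assoc)
    moreover have "norm (a - b) \<le> 3 * h"
    proof -
      have "norm (z /\<^sub>R norm z) = 1" using z by simp
      then have "norm b \<le> 2 * h" using norm_le_of_near_unit_step[OF _ b[unfolded law] \<eta>(2) h] by simp
      moreover have "\<nu> * h \<le> 1 * h" using nu h by (intro mult_right_mono) auto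
      ultimately show ?thesis using norm_triangle_ineq4[of a b] a by linarith
    qed
    then have "ap_gamma \<nu> * norm (e + a - (p + b)) \<le> ap_gamma \<nu> * (norm (e - p) + 3 * h)"
      using cs norm_triangle_ineq[of "e - p" "a - b"] by (intro mult_left_mono) (auto simp: algebra_simps)
    then have "radius_gap \<nu> RC e p - 3 * ap_gamma \<nu> * h \<le> radius_gap \<nu> RC (e + a) (p + b)"
      unfolding radius_gap_def apollonius_radius_def by (simp add: algebra_simps)
    ultimately show "nesting_margin \<nu> RC xC e p + 3/2 * margin_rate \<nu> \<delta> RC * h - K * h^2
        \<le> nesting_margin \<nu> RC xC (e + a) (p + b)
      \<and> radius_gap \<nu> RC e p - 3 * ap_gamma \<nu> * h \<le> radius_gap \<nu> RC (e + a) (p + b)" ..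
  qed
qed

lemma nesting_margin_grows_locally:
  fixes xE xP :: "real \<Rightarrow> pt"
  assumes RC: "RC = apollonius_radius \<nu> xE0 xP0 + \<delta>" and xC: "xC = apollonius_center \<nu> xE0 xP0"
    and nu: "0 < \<nu>" "\<nu> < 1" and dl: "0 < \<delta>"
    and lip: "\<nu>-lipschitz_on {t0..} xE" and t: "t0 \<le> t" and ne: "xE t \<noteq> xP t"
    and der: "(xP has_vector_derivative pursuer_law \<nu> \<delta> xE0 xP0 (xE t) (xP t)) (at t within {t0..})"
    and W: "radius_gap \<nu> RC (xE t) (xP t) > 0" and G: "\<delta>^2 \<le> nesting_margin \<nu> RC xC (xE t) (xP t)"
  shows "\<exists>d>0. \<forall>h. 0 < h \<and> h < d \<longrightarrow>
      nesting_margin \<nu> RC xC (xE t) (xP t) + margin_rate \<nu> \<delta> RC * h \<le> nesting_margin \<nu> RC xC (xE (t + h)) (xP (t + h))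
      \<and> radius_gap \<nu> RC (xE (t + h)) (xP (t + h)) > 0"
proof -
  note cs = apollonius_constants[OF nu]
  define c where "c = margin_rate \<nu> \<delta> RC"
  define w where "w = radius_gap \<nu> RC (xE t) (xP t)"
  have c: "c > 0" unfolding c_def RC by (rule margin_rate_pos[OF nu dl])
  obtain \<eta> K where \<eta>: "0 < \<eta>" and K: "0 \<le> K" and step:
    "\<And>h a b. 0 \<le> h \<Longrightarrow> norm a \<le> \<nu> * h \<Longrightarrow>
       norm (b - h *\<^sub>R pursuer_law \<nu> \<delta> xE0 xP0 (xE t) (xP t)) \<le> \<eta> * h \<Longrightarrow>
       nesting_margin \<nu> RC xC (xE t) (xP t) + 3/2 * c * h - K * h^2
         \<le> nesting_margin \<nu> RC xC (xE t + a) (xP t + b)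
       \<and> w - 3 * ap_gamma \<nu> * h \<le> radius_gap \<nu> RC (xE t + a) (xP t + b)"
    using nesting_margin_one_step[OF RC xC nu dl ne W G] unfolding c_def w_def by metis
  obtain d1 where d1: "d1 > 0" and tangent: "\<And>s. s \<in> {t0..} \<Longrightarrow> norm (s - t) < d1 \<Longrightarrow>
      norm (xP s - xP t - (s - t) *\<^sub>R pursuer_law \<nu> \<delta> xE0 xP0 (xE t) (xP t)) \<le> \<eta> * norm (s - t)"
    using der \<eta> unfolding has_vector_derivative_def has_derivative_within_alt by blast
  define d where "d = min d1 (min (c / (2 * K + 1)) (w / (3 * ap_gamma \<nu>)))"
  show ?thesis
  proof (intro exI[of _ d] conjI allI impI)
    show "d > 0" unfolding d_def using d1 c K W cs w_def by simp
    fix h assume h: "0 < h \<and> h < d"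
    have "norm (xE (t + h) - xE t) \<le> \<nu> * h"
      using lipschitz_on_normD[OF lip, of "t + h" t] t h by simp
    moreover have "norm (xP (t + h) - xP t - h *\<^sub>R pursuer_law \<nu> \<delta> xE0 xP0 (xE t) (xP t)) \<le> \<eta> * h"
      using tangent[of "t + h"] t h unfolding d_def by simp
    ultimately have one_step:
      "nesting_margin \<nu> RC xC (xE t) (xP t) + 3/2 * c * h - K * h^2
         \<le> nesting_margin \<nu> RC xC (xE (t + h)) (xP (t + h))"
      "w - 3 * ap_gamma \<nu> * h \<le> radius_gap \<nu> RC (xE (t + h)) (xP (t + h))"
      using step[of h "xE (t + h) - xE t" "xP (t + h) - xP t"] h by auto
    have "K * h \<le> K * (c / (2 * K + 1))" using h K unfolding d_def by (intro mult_left_mono) auto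
    also have "\<dots> \<le> c / 2" using K c by (simp add: field_simps)
    finally have "K * h^2 \<le> c / 2 * h" using h by (simp add: power2_eq_square mult_right_mono mult.assoc[symmetric])
    then show "nesting_margin \<nu> RC xC (xE t) (xP t) + margin_rate \<nu> \<delta> RC * h
        \<le> nesting_margin \<nu> RC xC (xE (t + h)) (xP (t + h))"
      using one_step(1) unfolding c_def by linarith
    have "3 * ap_gamma \<nu> * h < w" using h cs unfolding d_def by (simp add: field_simps)
    then show "radius_gap \<nu> RC (xE (t + h)) (xP (t + h)) > 0" using one_step(2) by linarith
  qed
qed

section \<open>Capture under the pursuer law\<close>

lemma admissible_traj_lipschitz:
  assumes "admissible_traj c t0 x0 x" and "0 \<le> c"
  shows "c-lipschitz_on {t0..} x"
  using assms by (intro lipschitz_onI) (auto simp: admissible_traj_def dist_real_def)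

lemma real_interval_induction:
  fixes P :: "real \<Rightarrow> bool" and a b :: real
  assumes past: "\<And>s. a < s \<Longrightarrow> s \<le> b \<Longrightarrow> (\<forall>r. a \<le> r \<and> r < s \<longrightarrow> P r) \<Longrightarrow> P s"
    and start: "P a"
    and future: "\<And>s. a \<le> s \<Longrightarrow> s < b \<Longrightarrow> P s \<Longrightarrow> \<exists>d>0. \<forall>h. 0 < h \<and> h < d \<longrightarrow> P (s + h)"
    and s: "a \<le> s" "s \<le> b"
  shows "P s"
proof (rule ccontr)
  define B where "B = {r. a \<le> r \<and> r \<le> b \<and> \<not> P r}"
  assume "\<not> P s"
  then have B: "B \<noteq> {}" "bdd_below B" using s unfolding B_def by (auto intro: bdd_belowI[of _ a])
  define s1 where "s1 = Inf B"
  have lower: "s1 \<le> r" if "r \<in> B" for r unfolding s1_def using that B(2) by (rule cInf_lower)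
  have "a \<le> s1" unfolding s1_def using B(1) by (rule cInf_greatest) (simp add: B_def)
  moreover have "s1 \<le> b" using B(1) lower unfolding B_def by fastforce
  ultimately have s1: "a \<le> s1" "s1 \<le> b" .
  have below: "\<forall>r. a \<le> r \<and> r < s1 \<longrightarrow> P r" using lower s1 unfolding B_def by force
  have Ps1: "P s1" using past[OF _ s1(2) below] start s1(1) by (cases "s1 = a") auto
  have "s1 \<noteq> b"
  proof
    assume "s1 = b"
    obtain r where "r \<in> B" using B(1) by blast
    then have "r = b" "\<not> P r" using lower[of r] \<open>s1 = b\<close> unfolding B_def by auto
    then show False using Ps1 \<open>s1 = b\<close> by simp
  qed
  then have "s1 < b" using s1(2) by simp
  then obtain d where d: "d > 0" "\<forall>h. 0 < h \<and> h < d \<longrightarrow> P (s1 + h)" using future s1(1) Ps1 by blast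
  have "s1 + d \<le> r" if r: "r \<in> B" for r
  proof (rule ccontr)
    have "\<not> P r" using r unfolding B_def by simp
    then have "s1 < r" using lower[OF r] Ps1 by (cases "r = s1") auto
    moreover assume "\<not> s1 + d \<le> r"
    ultimately show False using d(2)[rule_format, of "r - s1"] \<open>\<not> P r\<close> by simp
  qed
  then have "s1 + d \<le> s1" unfolding s1_def using cInf_greatest[OF B(1)] by blast
  then show False using d(1) by simp
qed

lemma continuous_ge_right_endpoint:
  fixes f :: "real \<Rightarrow> real"
  assumes "continuous_on {a..b} f" "a < b" "\<And>r. a \<le> r \<Longrightarrow> r < b \<Longrightarrow> c \<le> f r"
  shows "c \<le> f b"
  using assms by (intro continuous_ge_on_closure[of "{a..<b}" f b c]) auto

lemma capture_time_exists:
  fixes xE xP :: "real \<Rightarrow> pt"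
  assumes "continuous_on {t0..} xE" "continuous_on {t0..} xP" "t0 \<le> t1" "xP t1 = xE t1"
  obtains tf where "capture_time t0 xE xP tf"
proof -
  define S where "S = {t0..} \<inter> (\<lambda>t. xP t - xE t) -` {0}"
  have "closed S" unfolding S_def
    using assms(1,2) by (intro continuous_closed_preimage) (auto intro!: continuous_intros)
  moreover have S: "S \<noteq> {}" "bdd_below S" using assms(3,4) unfolding S_def by (auto intro: bdd_belowI[of _ t0])
  ultimately have "Inf S \<in> S" by (rule closed_contains_Inf[rotated 2])
  moreover have "Inf S \<le> t" if "t \<in> S" for t using that S(2) by (rule cInf_lower)
  ultimately have "capture_time t0 xE xP (Inf S)"
    unfolding capture_time_def S_def by (auto simp: not_le[symmetric])
  then show thesis by (rule that)
qed

context
  fixes \<nu> \<delta> t0 :: real and xE0 xP0 :: pt and xE xP :: "real \<Rightarrow> pt"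
  assumes nu: "0 < \<nu>" "\<nu> < 1" and ne: "xE0 \<noteq> xP0" and dl: "0 < \<delta>"
    and admE: "admissible_traj \<nu> t0 xE0 xE" and P0: "xP t0 = xP0" and contP: "continuous_on {t0..} xP"
    and derP: "\<forall>t\<ge>t0. (\<forall>s. t0 \<le> s \<and> s \<le> t \<longrightarrow> xP s \<noteq> xE s) \<longrightarrow>
      (xP has_vector_derivative pursuer_law \<nu> \<delta> xE0 xP0 (xE t) (xP t)) (at t within {t0..})"
  fixes RC :: real and xC :: pt
  defines "RC \<equiv> apollonius_radius \<nu> xE0 xP0 + \<delta>" and "xC \<equiv> apollonius_center \<nu> xE0 xP0"
begin

lemma evader_lipschitz: "\<nu>-lipschitz_on {t0..} xE"
  using admissible_traj_lipschitz[OF admE] nu by simp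

lemma evader_continuous: "continuous_on {t0..} xE"
  using lipschitz_on_continuous_on[OF evader_lipschitz] .

lemma nesting_margin_invariant:
  assumes T: "t0 \<le> T" and uncaught: "\<forall>s. t0 \<le> s \<and> s \<le> T \<longrightarrow> xP s \<noteq> xE s"
  shows "0 < radius_gap \<nu> RC (xE T) (xP T)
    \<and> \<delta>^2 + margin_rate \<nu> \<delta> RC * (T - t0) \<le> nesting_margin \<nu> RC xC (xE T) (xP T)"
proof -
  define c where "c = margin_rate \<nu> \<delta> RC"
  define g where "g t = nesting_margin \<nu> RC xC (xE t) (xP t)" for t
  define W where "W t = radius_gap \<nu> RC (xE t) (xP t)" for t
  define P where "P t \<longleftrightarrow> 0 < W t \<and> \<delta>^2 + c * (t - t0) \<le> g t" for t
  have c: "c > 0" unfolding c_def RC_def by (rule margin_rate_pos[OF nu dl])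
  have contg: "continuous_on {t0..} g" and contW: "continuous_on {t0..} W"
    unfolding g_def W_def nesting_margin_def radius_gap_def apollonius_radius_def apollonius_center_def
    by (intro continuous_intros evader_continuous contP)+
  have "P T"
  proof (rule real_interval_induction[of t0 T P])
    have "xE t0 = xE0" using admE unfolding admissible_traj_def by simp
    then have "W t0 = \<delta>" "g t0 = \<delta>^2"
      unfolding g_def W_def nesting_margin_def radius_gap_def RC_def xC_def apollonius_radius_def using P0 by simp_all
    then show "P t0" unfolding P_def using dl by simp
    show "t0 \<le> T" "T \<le> T" using T by auto
  next
    fix s assume s: "t0 < s" "s \<le> T" and before: "\<forall>r. t0 \<le> r \<and> r < s \<longrightarrow> P r"
    have "continuous_on {t0..s} g" "continuous_on {t0..s} W"
      using continuous_on_subset[OF contg] continuous_on_subset[OF contW] by auto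
    then have contgs: "continuous_on {t0..s} (\<lambda>r. g r - (\<delta>^2 + c * (r - t0)))" and contWs: "continuous_on {t0..s} W"
      by (auto intro!: continuous_on_diff continuous_intros)
    have "0 \<le> g s - (\<delta>^2 + c * (s - t0))"
      using contgs by (rule continuous_ge_right_endpoint[OF _ s(1)]) (use before in \<open>auto simp: P_def\<close>)
    moreover have "0 \<le> W s"
      using contWs by (rule continuous_ge_right_endpoint[OF _ s(1)]) (use before in \<open>auto simp: P_def\<close>)
    moreover have "g s \<le> (W s)^2" unfolding g_def W_def nesting_margin_def by simp
    moreover have "0 \<le> c * (s - t0)" "0 < \<delta>^2" using c s dl by simp_all
    ultimately have "0 < (W s)^2" "\<delta>^2 + c * (s - t0) \<le> g s" by linarith+
    then show "P s" unfolding P_def using \<open>0 \<le> W s\<close> by auto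
  next
    fix s assume s: "t0 \<le> s" "s < T" and Ps: "P s"
    have "0 \<le> c * (s - t0)" using c s by simp
    then have "\<delta>^2 \<le> g s" using Ps unfolding P_def by linarith
    moreover have "xE s \<noteq> xP s" "0 < W s" using uncaught s Ps unfolding P_def by auto
    moreover have "(xP has_vector_derivative pursuer_law \<nu> \<delta> xE0 xP0 (xE s) (xP s)) (at s within {t0..})"
      using derP uncaught s by auto
    ultimately obtain d where d: "d > 0"
      and grows: "\<forall>h. 0 < h \<and> h < d \<longrightarrow> g s + c * h \<le> g (s + h) \<and> 0 < W (s + h)"
      using nesting_margin_grows_locally[OF RC_def[THEN meta_eq_to_obj_eq] xC_def[THEN meta_eq_to_obj_eq] nu dl evader_lipschitz s(1)]
      unfolding c_def g_def W_def by blast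
    have "P (s + h)" if "0 < h \<and> h < d" for h
      using grows[rule_format, OF that] Ps unfolding P_def by (simp add: algebra_simps)
    then show "\<exists>d>0. \<forall>h. 0 < h \<and> h < d \<longrightarrow> P (s + h)" using d by blast
  qed
  then show ?thesis unfolding P_def W_def g_def c_def .
qed

lemma pursuit_meets: "\<exists>t\<ge>t0. xP t = xE t"
proof (rule ccontr)
  note cs = apollonius_constants[OF nu]
  define c where "c = margin_rate \<nu> \<delta> RC"
  define T where "T = t0 + RC^2 / c + 1"
  have c: "0 < c" unfolding c_def RC_def by (rule margin_rate_pos[OF nu dl])
  assume "\<not> (\<exists>t\<ge>t0. xP t = xE t)"
  then have "0 < radius_gap \<nu> RC (xE T) (xP T)"
    and margin: "\<delta>^2 + c * (T - t0) \<le> nesting_margin \<nu> RC xC (xE T) (xP T)"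
    using nesting_margin_invariant[of T] c unfolding c_def T_def by auto
  moreover have "radius_gap \<nu> RC (xE T) (xP T) \<le> RC"
    unfolding radius_gap_def apollonius_radius_def RC_def using cs by simp
  ultimately have "(radius_gap \<nu> RC (xE T) (xP T))^2 \<le> RC^2" by (intro power_mono) auto
  then have "nesting_margin \<nu> RC xC (xE T) (xP T) \<le> RC^2"
    unfolding nesting_margin_def using zero_le_power2[of "norm (apollonius_center \<nu> (xE T) (xP T) - xC)"]
    by linarith
  moreover have "c * (T - t0) = RC^2 + c" unfolding T_def using c by (simp add: field_simps)
  ultimately show False using margin c zero_le_power2[of \<delta>] by linarith
qed

lemma apollonius_disc_nested_before_capture:
  assumes "t0 \<le> r" and "\<forall>s. t0 \<le> s \<and> s \<le> r \<longrightarrow> xP s \<noteq> xE s"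
  shows "norm (apollonius_center \<nu> (xE r) (xP r) - xC) \<le> radius_gap \<nu> RC (xE r) (xP r)"
proof -
  have "0 \<le> margin_rate \<nu> \<delta> RC * (r - t0)"
    using margin_rate_pos[OF nu dl, of xE0 xP0] assms(1) unfolding RC_def by simp
  then have gap: "0 < radius_gap \<nu> RC (xE r) (xP r)"
    and "0 \<le> nesting_margin \<nu> RC xC (xE r) (xP r)"
    using nesting_margin_invariant[OF assms] zero_le_power2[of \<delta>] by linarith+
  then have "(norm (apollonius_center \<nu> (xE r) (xP r) - xC))^2 \<le> (radius_gap \<nu> RC (xE r) (xP r))^2"
    unfolding nesting_margin_def by simp
  then show ?thesis using power2_le_imp_le less_imp_le[OF gap] by blast
qed

lemma pursuit_captures_in_enlarged_disc:
  obtains tf where "capture_time t0 xE xP tf" and "dist (xE tf) xC \<le> RC"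
proof -
  obtain tf where capture: "capture_time t0 xE xP tf"
    using capture_time_exists[OF evader_continuous contP] pursuit_meets by blast
  have "xE t0 = xE0" using admE unfolding admissible_traj_def by simp
  then have "t0 < tf" using capture P0 ne unfolding capture_time_def by (cases "tf = t0") auto
  define F where "F t = radius_gap \<nu> RC (xE t) (xP t) - norm (apollonius_center \<nu> (xE t) (xP t) - xC)" for t
  have contF: "continuous_on {t0..tf} F" unfolding F_def radius_gap_def apollonius_radius_def apollonius_center_def
    by (intro continuous_intros continuous_on_subset[OF evader_continuous] continuous_on_subset[OF contP]) auto
  have nonneg: "0 \<le> F r" if "t0 \<le> r" "r < tf" for r
    using apollonius_disc_nested_before_capture[of r] capture that
    unfolding F_def capture_time_def by auto
  have "0 \<le> F tf" using contF \<open>t0 < tf\<close> nonneg by (rule continuous_ge_right_endpoint)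
  moreover have "xP tf = xE tf" using capture unfolding capture_time_def by simp
  ultimately have "dist (xE tf) xC \<le> RC"
    unfolding F_def radius_gap_def apollonius_radius_def by (simp add: dist_norm apollonius_center_self[OF nu])
  with capture show thesis by (rule that)
qed

end

section \<open>The epsilon-equilibrium\<close>

lemma near_enlarged_cball:
  fixes x c :: "'a::real_normed_vector"
  assumes "0 \<le> R" "0 \<le> \<delta>" "dist x c \<le> R + \<delta>"
  obtains q where "q \<in> cball c R" "dist x q \<le> \<delta>"
proof (cases "dist x c \<le> R")
  case True
  then show thesis using assms(2) by (intro that[of x]) (auto simp: dist_commute)
next
  case False
  define q where "q = c + (R / dist x c) *\<^sub>R (x - c)"
  have qc: "dist q c = R" using False assms(1) by (auto simp: q_def dist_norm)
  have "x - q = (1 - R / dist x c) *\<^sub>R (x - c)" unfolding q_def by (simp add: algebra_simps)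
  moreover have "0 \<le> 1 - R / dist x c" using False assms(1) by (simp add: divide_le_eq)
  ultimately have "dist x q = (1 - R / dist x c) * dist x c" by (simp add: dist_norm)
  also have "\<dots> = dist x c - R" using False assms(1) by (auto simp: left_diff_distrib)
  finally have "dist x q = dist x c - R" .
  then show thesis using qc assms(3) by (intro that[of q]) (auto simp: dist_commute)
qed

lemma continuous_almost_min_near_cball:
  fixes \<phi> :: "'a::euclidean_space \<Rightarrow> real"
  assumes cont: "continuous_on UNIV \<phi>" and R: "0 \<le> R" and \<epsilon>: "0 < \<epsilon>"
  obtains \<delta> where "0 < \<delta>" "\<And>x. dist x c \<le> R + \<delta> \<Longrightarrow> Inf (\<phi> ` cball c R) - \<epsilon> \<le> \<phi> x"
proof -
  have "uniformly_continuous_on (cball c (R + 1)) \<phi>"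
    by (rule compact_uniformly_continuous) (auto intro: continuous_on_subset[OF cont])
  then obtain \<delta>1 where \<delta>1: "0 < \<delta>1"
    and uc: "\<And>x x'. x \<in> cball c (R + 1) \<Longrightarrow> x' \<in> cball c (R + 1) \<Longrightarrow> dist x' x < \<delta>1 \<Longrightarrow> dist (\<phi> x') (\<phi> x) < \<epsilon>"
    unfolding uniformly_continuous_on_def using \<epsilon> by metis
  have bdd: "bdd_below (\<phi> ` cball c R)"
    by (intro bounded_imp_bdd_below compact_imp_bounded compact_continuous_image)
      (auto intro: continuous_on_subset[OF cont])
  show thesis
  proof (rule that[of "min 1 (\<delta>1 / 2)"])
    show "0 < min 1 (\<delta>1 / 2)" using \<delta>1 by simp
    fix x assume x: "dist x c \<le> R + min 1 (\<delta>1 / 2)"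
    then obtain q where q: "q \<in> cball c R" "dist x q \<le> min 1 (\<delta>1 / 2)"
      using near_enlarged_cball[OF R] \<delta>1 by (metis min_def zero_le_one less_eq_real_def half_gt_zero)
    have "dist (\<phi> x) (\<phi> q) < \<epsilon>"
      using uc[of q x] q x \<delta>1 by (auto simp: dist_commute)
    moreover have "Inf (\<phi> ` cball c R) \<le> \<phi> q" using q(1) bdd by (simp add: cInf_lower)
    ultimately show "Inf (\<phi> ` cball c R) - \<epsilon> \<le> \<phi> x" by (simp add: dist_real_def)
  qed
qed

theorem mainTheorem5:
  fixes \<nu> t0 :: real and xE0 xP0 :: pt and \<phi> :: "pt \<Rightarrow> real"
  assumes "0 < \<nu>" and "\<nu> < 1"
    and "xE0 \<noteq> xP0"
    and "continuous_on UNIV \<phi>"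
  shows "\<forall>\<epsilon>>0. \<exists>\<delta>>0.
     (\<forall>xs \<in> argmin_set \<phi> \<nu> xE0 xP0. \<forall>xP tf.
        admissible_traj 1 t0 xP0 xP \<longrightarrow>
        capture_time t0 (straight_evader \<nu> t0 xE0 xs) xP tf \<longrightarrow>
        \<phi> (straight_evader \<nu> t0 xE0 xs tf) \<le> phi_star \<phi> \<nu> xE0 xP0)
   \<and> (\<forall>xE xP.
        admissible_traj \<nu> t0 xE0 xE \<longrightarrow>
        xP t0 = xP0 \<longrightarrow>
        continuous_on {t0..} xP \<longrightarrow>
        (\<forall>t\<ge>t0. (\<forall>s. t0 \<le> s \<and> s \<le> t \<longrightarrow> xP s \<noteq> xE s) \<longrightarrow>
             (xP has_vector_derivative pursuer_law \<nu> \<delta> xE0 xP0 (xE t) (xP t)) (at t within {t0..})) \<longrightarrow>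
        (\<exists>tf. capture_time t0 xE xP tf \<and> \<phi> (xE tf) \<ge> phi_star \<phi> \<nu> xE0 xP0 - \<epsilon>))"
    (is "\<forall>\<epsilon>>0. \<exists>\<delta>>0. ?evader_secures \<and> ?pursuer_secures \<delta> \<epsilon>")
proof (intro allI impI)
  fix \<epsilon> :: real assume "0 < \<epsilon>"
  have "0 \<le> apollonius_radius \<nu> xE0 xP0"
    using apollonius_constants[OF assms(1,2)] by (simp add: apollonius_radius_def)
  then obtain \<delta> where "0 < \<delta>" and near_min: "\<And>x. dist x (apollonius_center \<nu> xE0 xP0)
      \<le> apollonius_radius \<nu> xE0 xP0 + \<delta> \<Longrightarrow> phi_star \<phi> \<nu> xE0 xP0 - \<epsilon> \<le> \<phi> x"
    using continuous_almost_min_near_cball[OF assms(4) _ \<open>0 < \<epsilon>\<close>]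
    unfolding phi_star_def apollonius_disc_def by blast
  have ?evader_secures
    using straight_evader_captured_at_target[OF assms(1-3)] unfolding argmin_set_def by auto
  moreover have "?pursuer_secures \<delta> \<epsilon>"
    using pursuit_captures_in_enlarged_disc[OF assms(1-3) \<open>0 < \<delta>\<close>] near_min by metis
  ultimately show "\<exists>\<delta>>0. ?evader_secures \<and> ?pursuer_secures \<delta> \<epsilon>" using \<open>0 < \<delta>\<close> by blast
qed

end
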